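(* Let $n\ge1$ and let $\mu = [x;\,k_1\dots k_m]$ and $\nu=[x;\,\ell_1\dots\ell_{m'}]$ be two loops in $Q_n$ starting (and ending) at the same vertex $x$. Then $p_\mu p_\nu = p_\nu p_\mu$ in $C^\ast(Q_n)$.
   Context: For $n\ge1$, identify integers $0\le i<2^n$ with their $n$-digit binary representations and let $i\#k$ be $i$ with its $k$-th digit flipped. The hypercube $Q_n$ has vertex classes $U_n$ (even number of $1$'s) and $V_n$ (odd number of $1$'s), with $i\in U_n$, $j\in V_n$ adjacent iff $j = i\#k$ for some $k<n$. $C^\ast(Q_n)$ is the universal unital C*-algebra generated by projections $p_x$ ($x\in U_n\cup V_n$) with $\sum_{u\in U_n}p_u = 1 = \sum_{v\in V_n}p_v$ and $p_up_v=0$ when $u\in U_n,v\in V_n$ are non-adjacent. For a vertex $x$ and indices $k_1,\dots,k_m<n$, $[x;\,k_1\dots k_m]$ denotes the path $x_1\dots x_{m+1}$ with $x_1=x$, $x_{r+1}=x_r\#k_r$; it is a loop if $x_{m+1}=x_1$. For a path $\mu=x_1\dots x_{m+1}$, $p_\mu = p_{x_1}\cdots p_{x_{m+1}}$. *)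

theory Defs
  imports Complex_Main
begin

locale unital_cstar_algebra =
  fixes scaleC :: "complex \<Rightarrow> 'a::{real_normed_algebra_1, banach} \<Rightarrow> 'a"
    and star :: "'a \<Rightarrow> 'a"
  assumes scaleC_add_right: "scaleC c (x + y) = scaleC c x + scaleC c y"
    and scaleC_add_left: "scaleC (c + d) x = scaleC c x + scaleC d x"
    and scaleC_scaleC: "scaleC c (scaleC d x) = scaleC (c * d) x"
    and scaleC_of_real: "scaleC (complex_of_real r) x = scaleR r x"
    and mult_scaleC_left: "scaleC c x * y = scaleC c (x * y)"
    and mult_scaleC_right: "x * scaleC c y = scaleC c (x * y)"
    and norm_scaleC: "norm (scaleC c x) = cmod c * norm x"
    and star_star: "star (star x) = x"
    and star_add: "star (x + y) = star x + star y"
    and star_mult: "star (x * y) = star y * star x"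
    and star_scaleC: "star (scaleC c x) = scaleC (cnj c) (star x)"
    and cstar_identity: "norm (star x * x) = (norm x)\<^sup>2"

definition is_projection :: "('a::ring_1 \<Rightarrow> 'a) \<Rightarrow> 'a \<Rightarrow> bool" where
  "is_projection star q \<longleftrightarrow> q * q = q \<and> star q = q"

text \<open>Vertices are the integers 0 <= i < 2^n; the k-th binary digit is bit i k;
  i#k is flip_bit k i.\<close>

definition Q_U :: "nat \<Rightarrow> nat set" where
  "Q_U n = {i. i < 2 ^ n \<and> even (card {k. k < n \<and> bit i k})}"

definition Q_V :: "nat \<Rightarrow> nat set" where
  "Q_V n = {i. i < 2 ^ n \<and> odd (card {k. k < n \<and> bit i k})}"

definition Q_adj :: "nat \<Rightarrow> nat \<Rightarrow> nat \<Rightarrow> bool" where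
  "Q_adj n u v \<longleftrightarrow> (\<exists>k<n. v = flip_bit k u)"

text \<open>A family of projections satisfying the defining relations of C*(Q_n).\<close>

definition Q_rep :: "nat \<Rightarrow> ('a::ring_1 \<Rightarrow> 'a) \<Rightarrow> (nat \<Rightarrow> 'a) \<Rightarrow> bool" where
  "Q_rep n star p \<longleftrightarrow>
     (\<forall>x < 2 ^ n. is_projection star (p x)) \<and>
     (\<Sum>u\<in>Q_U n. p u) = 1 \<and>
     (\<Sum>v\<in>Q_V n. p v) = 1 \<and>
     (\<forall>u\<in>Q_U n. \<forall>v\<in>Q_V n. \<not> Q_adj n u v \<longrightarrow> p u * p v = 0)"

text \<open>path_verts x [k1,...,km] is the vertex list x1 ... x(m+1) of [x; k1...km].\<close>

fun path_verts :: "nat \<Rightarrow> nat list \<Rightarrow> nat list" where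
  "path_verts x [] = [x]"
| "path_verts x (k # ks) = x # path_verts (flip_bit k x) ks"

definition is_loop :: "nat \<Rightarrow> nat list \<Rightarrow> bool" where
  "is_loop x ks \<longleftrightarrow> last (path_verts x ks) = x"

definition path_proj :: "(nat \<Rightarrow> 'a::monoid_mult) \<Rightarrow> nat \<Rightarrow> nat list \<Rightarrow> 'a" where
  "path_proj p x ks = prod_list (map p (path_verts x ks))"

end

theory Submission
  imports Defs
begin

text \<open>Each direction occurs an even number of times in a loop, so it suffices that the product
  along a path only changes sign when two consecutive distinct directions are swapped:
  \<open>p y * p (y#k) * p z = - p y * p (y#l) * p z\<close> for \<open>z = y#k#l\<close>. To see this, insert
  \<open>1 = \<Sum> p w\<close>, summed over the colour class opposite to \<open>y\<close>, into \<open>p y * p z = 0\<close>; every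
  term except those of the two common neighbours \<open>y#k\<close>, \<open>y#l\<close> vanishes. This uses that
  projections summing to 1 in a C*-algebra are pairwise orthogonal, which we derive from norms alone:
  a projection \<open>e\<close> is an extreme point of the unit ball of its corner, i.e. a self-adjoint \<open>a\<close>
  with \<open>e * a = a = a * e\<close> and \<open>norm (e \<plusminus> a) \<le> 1\<close> is zero.\<close>

lemma norm_convex_le_1:
  fixes u v :: "'a::real_normed_vector"
  assumes "norm u \<le> 1" "norm v \<le> 1" "0 \<le> t" "t \<le> 1"
  shows "norm (t *\<^sub>R u + (1 - t) *\<^sub>R v) \<le> 1"
proof -
  have "norm (t *\<^sub>R u + (1 - t) *\<^sub>R v) \<le> t * norm u + (1 - t) * norm v"
    using norm_triangle_ineq[of "t *\<^sub>R u" "(1 - t) *\<^sub>R v"] assms by simp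
  also have "\<dots> \<le> t * 1 + (1 - t) * 1"
    using assms by (intro add_mono mult_left_mono) auto
  finally show ?thesis by simp
qed

lemma norm_add_scaleR_le_1:
  fixes x a :: "'a::real_normed_vector"
  assumes "norm (x + a) \<le> 1" "norm (x - a) \<le> 1" "\<bar>s\<bar> \<le> 1"
  shows "norm (x + s *\<^sub>R a) \<le> 1"
proof -
  have "x + s *\<^sub>R a = ((1 + s) / 2) *\<^sub>R (x + a) + (1 - (1 + s) / 2) *\<^sub>R (x - a)"
    by (simp add: algebra_simps flip: scaleR_add_left scaleR_diff_left)
  then show ?thesis
    using norm_convex_le_1[OF assms(1,2)] assms(3) by simp
qed

lemma norm_mult_le_1:
  fixes x y :: "'a::real_normed_algebra"
  assumes "norm x \<le> 1" "norm y \<le> 1"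
  shows "norm (x * y) \<le> 1"
  using norm_mult_ineq[of x y] mult_le_one[OF assms(1) norm_ge_zero assms(2)] by linarith

context unital_cstar_algebra
begin

lemma star_0 [simp]: "star 0 = 0"
  by (metis add_cancel_right_right star_add add_0)

lemma star_1 [simp]: "star 1 = 1"
  by (metis mult_1_left mult_1_right star_mult star_star)

lemma star_diff: "star (x - y) = star x - star y"
  by (metis add_diff_cancel diff_add_cancel star_add)

lemma star_scaleR: "star (r *\<^sub>R x) = r *\<^sub>R star x"
  using star_scaleC[of "complex_of_real r" x] by (simp add: scaleC_of_real)

lemma scaleC_1 [simp]: "scaleC 1 x = x"
  using scaleC_of_real[of 1 x] by simp

lemma scaleC_minus_1 [simp]: "scaleC (- 1) x = - x"
  using scaleC_of_real[of "- 1" x] by simp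

lemma norm_projection_le_1:
  assumes "is_projection star q"
  shows "norm q \<le> 1"
proof -
  have "norm q = (norm q)\<^sup>2"
    using cstar_identity[of q] assms by (simp add: is_projection_def)
  then show ?thesis
    by (cases "norm q = 0") (auto simp: power2_eq_square)
qed

lemma is_projection_1_minus: "is_projection star q \<Longrightarrow> is_projection star (1 - q)"
  by (auto simp: is_projection_def star_diff algebra_simps)

lemma norm_compression_le_1:
  assumes e: "is_projection star e" and q: "is_projection star q"
  shows "norm (e - e * q * e) \<le> 1"
proof -
  define c where "c = (1 - q) * e"
  have "star c * c = e * ((1 - q) * (1 - q)) * e"
    using e q by (simp add: c_def is_projection_def star_mult star_diff mult.assoc)
  also have "\<dots> = e - e * q * e"
    using e q by (simp add: is_projection_def algebra_simps)
  finally have "(norm c)\<^sup>2 = norm (e - e * q * e)"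
    using cstar_identity[of c] by simp
  moreover have "norm c \<le> 1"
    unfolding c_def
    using norm_mult_le_1 norm_projection_le_1 is_projection_1_minus[OF q] e by blast
  ultimately show ?thesis
    by (metis abs_norm_cancel abs_square_le_1)
qed

lemma corner_perturbation_mult:
  assumes "e * e = e" "e * a = a" "a * e = a"
  shows "(e + scaleC v a) * (e + scaleC w a) = e + scaleC (v + w) a + scaleC (v * w) (a * a)"
  using assms by (simp add: algebra_simps mult_scaleC_left mult_scaleC_right scaleC_scaleC scaleC_add_left scaleC_add_right)

text \<open>By the C*-identity, \<open>norm (e + z a)\<^sup>2\<close> is the norm of \<open>e + 2 Re z a + \<bar>z\<bar>\<^sup>2 a\<^sup>2\<close>,
  a convex combination of the squares of \<open>e \<plusminus> \<bar>z\<bar> a\<close>.\<close>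

lemma norm_corner_disc_le_1:
  assumes e: "is_projection star e" and a: "star a = a" "e * a = a" "a * e = a"
    and pm: "norm (e + a) \<le> 1" "norm (e - a) \<le> 1" and z: "cmod z \<le> 1"
  shows "norm (e + scaleC z a) \<le> 1"
proof -
  have ee: "e * e = e" "star e = e"
    using e by (auto simp: is_projection_def)
  define sq where "sq s = e + (2 * s) *\<^sub>R a + (s * s) *\<^sub>R (a * a)" for s
  have norm_sq: "norm (sq s) \<le> 1" if "\<bar>s\<bar> \<le> 1" for s
  proof -
    have "sq s = (e + s *\<^sub>R a) * (e + s *\<^sub>R a)"
      using ee a by (simp add: sq_def algebra_simps flip: scaleR_add_left)
    then show ?thesis
      using norm_mult_le_1 norm_add_scaleR_le_1[OF pm that] by metis
  qed
  define r where "r = cmod z"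
  define t where "t = (1 + Re z / r) / 2"
  have Re_le: "\<bar>Re z\<bar> \<le> r"
    unfolding r_def by (rule abs_Re_le_cmod)
  then have "\<bar>Re z / r\<bar> \<le> 1"
    by (cases "r = 0") (auto simp: abs_divide divide_le_eq_1)
  then have t: "0 \<le> t" "t \<le> 1"
    unfolding t_def by (simp_all only: abs_le_iff) auto
  have "2 * Re z = t * (2 * r) + (1 - t) * (2 * - r)"
    using Re_le by (cases "r = 0") (auto simp: t_def field_simps)
  have "cnj z + z = complex_of_real (2 * Re z)" "cnj z * z = complex_of_real (r * r)"
    by (simp add: complex_eq_iff)
      (metis complex_norm_square mult.commute power2_eq_square r_def)
  moreover have "star (e + scaleC z a) * (e + scaleC z a)
      = e + scaleC (cnj z + z) a + scaleC (cnj z * z) (a * a)"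
    using ee a by (simp add: star_add star_scaleC corner_perturbation_mult)
  ultimately have "star (e + scaleC z a) * (e + scaleC z a) = e + (2 * Re z) *\<^sub>R a + (r * r) *\<^sub>R (a * a)"
    by (simp only: scaleC_of_real)
  also have "\<dots> = t *\<^sub>R sq r + (1 - t) *\<^sub>R sq (- r)"
    using \<open>2 * Re z = _\<close> by (simp add: sq_def algebra_simps flip: scaleR_add_left)
  finally have "(norm (e + scaleC z a))\<^sup>2 = norm (t *\<^sub>R sq r + (1 - t) *\<^sub>R sq (- r))"
    by (simp only: flip: cstar_identity)
  also have "\<dots> \<le> 1"
    using z by (intro norm_convex_le_1 norm_sq t) (auto simp: r_def)
  finally show ?thesis
    by (simp add: power_le_one_iff)
qed

text \<open>Averaging the squares of \<open>e + z a\<close> and \<open>e + \<i> z a\<close> cancels the quadratic terms and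
  leaves \<open>e + (1 + \<i>) z a\<close>; iterated, this forces \<open>norm ((1 + \<i>)\<^sup>k a) \<le> 1\<close> for all \<open>k\<close>.\<close>

lemma norm_corner_disc_enlarge:
  assumes corner: "e * e = e" "e * a = a" "a * e = a"
    and disc: "\<And>w. cmod w \<le> 1 \<Longrightarrow> norm (e + scaleC w a) \<le> 1" and z: "cmod z \<le> 1"
  shows "norm (e + scaleC z (scaleC (1 + \<i>) a)) \<le> 1"
proof -
  have square: "norm ((e + scaleC w a) * (e + scaleC w a)) \<le> 1" if "cmod w \<le> 1" for w
    using norm_mult_le_1 disc[OF that] by blast
  define u where "u = scaleC z a"
  define v where "v = scaleC \<i> u"
  have uv: "e * u = u" "u * e = u" "e * v = v" "v * e = v"
    using corner by (simp_all add: u_def v_def mult_scaleC_left mult_scaleC_right)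
  have "v * v = - (u * u)"
    by (simp add: v_def mult_scaleC_left mult_scaleC_right scaleC_scaleC)
  then have "(e + u) * (e + u) + (e + v) * (e + v) = 2 *\<^sub>R (e + u + v)"
    using corner uv by (simp add: algebra_simps scaleR_2)
  moreover have "scaleC z (scaleC (1 + \<i>) a) = u + v"
    by (simp add: u_def v_def scaleC_scaleC algebra_simps flip: scaleC_add_left)
  ultimately have "e + scaleC z (scaleC (1 + \<i>) a)
      = (1 / 2) *\<^sub>R ((e + scaleC z a) * (e + scaleC z a))
        + (1 - 1 / 2) *\<^sub>R ((e + scaleC (\<i> * z) a) * (e + scaleC (\<i> * z) a))"
    by (simp add: u_def v_def scaleC_scaleC add.assoc flip: scaleR_add_right)
  also have "norm \<dots> \<le> 1"
    using z by (intro norm_convex_le_1 square) (auto simp: norm_mult)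
  finally show ?thesis .
qed

lemma selfadjoint_corner_eq_0:
  assumes e: "is_projection star e" and a: "star a = a" "e * a = a" "a * e = a"
    and pm: "norm (e + a) \<le> 1" "norm (e - a) \<le> 1"
  shows "a = 0"
proof -
  have ee: "e * e = e"
    using e by (simp add: is_projection_def)
  have disc: "norm (e + scaleC z (scaleC ((1 + \<i>) ^ k) a)) \<le> 1" if "cmod z \<le> 1" for k z
    using that
  proof (induction k arbitrary: z)
    case 0
    then show ?case
      using norm_corner_disc_le_1[OF assms] by simp
  next
    case (Suc k)
    have "e * scaleC c a = scaleC c a" "scaleC c a * e = scaleC c a" for c
      using a by (simp_all add: mult_scaleC_left mult_scaleC_right)
    then have "norm (e + scaleC z (scaleC (1 + \<i>) (scaleC ((1 + \<i>) ^ k) a))) \<le> 1"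
      using norm_corner_disc_enlarge[OF ee] Suc by blast
    then show ?case
      by (simp add: scaleC_scaleC mult.commute)
  qed
  have "sqrt 2 ^ k * norm a \<le> 1" for k
  proof -
    define b where "b = scaleC ((1 + \<i>) ^ k) a"
    have "2 * norm b = norm ((e + b) - (e + scaleC (- 1) b))"
      by (simp flip: scaleR_2)
    also have "\<dots> \<le> 2"
      using norm_triangle_ineq4[of "e + b" "e + scaleC (- 1) b"] disc[of 1 k] disc[of "- 1" k]
      by (simp add: b_def)
    finally have "norm b \<le> 1" by simp
    moreover have "cmod (1 + \<i>) = sqrt 2"
      by (simp add: cmod_def)
    ultimately show ?thesis
      by (simp add: b_def norm_scaleC norm_power)
  qed
  show "a = 0"
  proof (rule ccontr)
    assume "a \<noteq> 0"
    then obtain k where "1 / norm a < sqrt 2 ^ k"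
      using real_arch_pow[of "sqrt 2"] by auto
    with \<open>sqrt 2 ^ k * norm a \<le> 1\<close> \<open>a \<noteq> 0\<close> show False
      by (simp add: field_simps)
  qed
qed

text \<open>\<open>e + c / (card T + 1)\<close> is the average of \<open>e\<close> and the \<open>e - d i\<close>.\<close>

lemma selfadjoint_corner_eq_0_of_neg_sum:
  assumes e: "is_projection star e" and c: "star c = c" "e * c = c" "c * e = c" "norm (e - c) \<le> 1"
    and T: "finite T" "\<And>i. i \<in> T \<Longrightarrow> norm (e - d i) \<le> 1" and sum: "(\<Sum>i\<in>T. d i) = - c"
  shows "c = 0"
proof -
  define t where "t = 1 / (real (card T) + 1)"
  have t: "0 < t" "t \<le> 1" "t + t * real (card T) = 1"
    by (simp_all add: t_def field_simps)
  have norm_e: "norm e \<le> 1"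
    by (rule norm_projection_le_1[OF e])
  have "(\<Sum>i\<in>T. norm (e - d i)) \<le> (\<Sum>i\<in>T. 1)"
    using T by (intro sum_mono) auto
  then have "norm (e + (\<Sum>i\<in>T. e - d i)) \<le> 1 + real (card T)"
    using norm_triangle_ineq[of e "\<Sum>i\<in>T. e - d i"] norm_sum[of "\<lambda>i. e - d i" T] norm_e by simp
  moreover have "e + t *\<^sub>R c = t *\<^sub>R (e + (\<Sum>i\<in>T. e - d i))"
  proof -
    have "(\<Sum>i\<in>T. e - d i) = real (card T) *\<^sub>R e + c"
      using sum by (simp add: sum_subtractf scaleR_conv_of_real)
    then have "t *\<^sub>R (e + (\<Sum>i\<in>T. e - d i)) = (t + t * real (card T)) *\<^sub>R e + t *\<^sub>R c"
      by (simp add: algebra_simps)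
    then show ?thesis
      using t by simp
  qed
  ultimately have "norm (e + t *\<^sub>R c) \<le> t * (1 + real (card T))"
    using t by (simp add: mult_left_mono)
  then have plus: "norm (e + t *\<^sub>R c) \<le> 1"
    using t by (simp add: algebra_simps)
  have "e - t *\<^sub>R c = t *\<^sub>R (e - c) + (1 - t) *\<^sub>R e"
    by (simp add: algebra_simps)
  also have "norm \<dots> \<le> 1"
    using c norm_e t by (intro norm_convex_le_1) auto
  finally have minus: "norm (e - t *\<^sub>R c) \<le> 1" .
  have "t *\<^sub>R c = 0"
    using c plus minus by (intro selfadjoint_corner_eq_0[OF e]) (simp_all add: star_scaleR)
  then show ?thesis
    using t by simp
qed

text \<open>With \<open>e = q u\<close>, the compressions \<open>e * q i * e\<close> of the other projections sum to
  \<open>e * (1 - e) * e = 0\<close>, so \<open>e * q w * e = (q w * e)\<^sup>* * (q w * e)\<close> vanishes.\<close>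

lemma projections_sum_1_orthogonal:
  assumes S: "finite S" and proj: "\<And>i. i \<in> S \<Longrightarrow> is_projection star (q i)"
    and sum: "(\<Sum>i\<in>S. q i) = 1" and uw: "u \<in> S" "w \<in> S" "u \<noteq> w"
  shows "q u * q w = 0"
proof -
  define e where "e = q u"
  define c where "c i = e * q i * e" for i
  have e: "is_projection star e"
    using proj uw by (simp add: e_def)
  then have ee: "e * e = e" "star e = e"
    by (simp_all add: is_projection_def)
  have qw: "q w * q w = q w" "star (q w) = q w"
    using proj[OF uw(2)] by (simp_all add: is_projection_def)
  have "(\<Sum>i\<in>S - {u}. q i) = 1 - e"
    using sum S uw by (simp add: e_def sum.remove algebra_simps flip: eq_diff_eq')
  then have "(\<Sum>i\<in>S - {u}. c i) = e * (1 - e) * e"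
    by (simp add: c_def flip: sum_distrib_left sum_distrib_right)
  also have "\<dots> = 0"
    using ee by (simp add: algebra_simps)
  finally have "(\<Sum>i\<in>S - {u}. c i) = 0" .
  moreover have "S - {u} = insert w (S - {u, w})" "w \<notin> S - {u, w}"
    using uw by auto
  ultimately have "(\<Sum>i\<in>S - {u, w}. c i) = - c w"
    using S by (simp add: minus_unique[symmetric])
  moreover have "star (c w) = c w" "e * c w = c w" "c w * e = c w"
    using ee qw by (simp_all add: c_def star_mult mult.assoc flip: mult.assoc[of e e])
  ultimately have "c w = 0"
    using S norm_compression_le_1[OF e] proj uw
    by (intro selfadjoint_corner_eq_0_of_neg_sum[OF e, of _ "S - {u, w}" c]) (auto simp: c_def)
  moreover have "star (q w * e) * (q w * e) = c w"
    using ee qw by (simp add: c_def star_mult mult.assoc flip: mult.assoc[of "q w"])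
  ultimately have "q w * e = 0"
    using cstar_identity[of "q w * e"] by simp
  moreover have "q u * q w = star (q w * e)"
    using ee qw by (simp add: star_mult e_def)
  ultimately show ?thesis
    by simp
qed

end

lemma flip_bit_flip_bit_same [simp]: "flip_bit k (flip_bit k (x::nat)) = x"
  by (rule bit_eqI) (auto simp: bit_flip_bit_iff)

lemma flip_bit_commute: "flip_bit k (flip_bit l (x::nat)) = flip_bit l (flip_bit k x)"
  by (rule bit_eqI) (auto simp: bit_flip_bit_iff)

lemma flip_bit_less_power: "k < n \<Longrightarrow> (x::nat) < 2 ^ n \<Longrightarrow> flip_bit k x < 2 ^ n"
  by (metis take_bit_flip_bit_eq take_bit_nat_eq_self_iff not_le)

lemma flip_bit_flip_bit_eq_imp:
  assumes "flip_bit j (flip_bit i (y::nat)) = flip_bit l (flip_bit k y)" and "k \<noteq> l"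
  shows "i = k \<or> i = l"
proof -
  have diff: "((t = i) \<noteq> (t = j)) \<longleftrightarrow> ((t = k) \<noteq> (t = l))" for t
    using arg_cong[OF assms(1), of "\<lambda>z. bit z t"] by (auto simp: bit_flip_bit_iff)
  show ?thesis
    using diff[of i] diff[of k] assms(2) by auto
qed

lemma odd_card_bits_flip_bit_iff:
  assumes "k < n"
  shows "odd (card {t. t < n \<and> bit (flip_bit k (x::nat)) t}) \<longleftrightarrow> even (card {t. t < n \<and> bit x t})"
proof -
  let ?A = "{t. t < n \<and> bit x t}"
  have "{t. t < n \<and> bit (flip_bit k x) t} = (if bit x k then ?A - {k} else insert k ?A)"
    using assms by (auto simp: bit_flip_bit_iff)
  moreover have "bit x k \<Longrightarrow> card ?A > 0"
    using assms by (auto simp: card_gt_0_iff)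
  ultimately show ?thesis
    using assms by (auto simp: card_Diff_singleton)
qed

lemma flip_bit_flip_bit_neq: "k \<noteq> l \<Longrightarrow> (y::nat) \<noteq> flip_bit l (flip_bit k y)"
  by (auto simp: bit_eq_iff bit_flip_bit_iff)

lemma Q_V_eq: "Q_V n = {..<2 ^ n} - Q_U n"
  by (auto simp: Q_U_def Q_V_def)

lemma flip_bit_Q_U_iff: "k < n \<Longrightarrow> x < 2 ^ n \<Longrightarrow> flip_bit k x \<in> Q_U n \<longleftrightarrow> x \<notin> Q_U n"
  using odd_card_bits_flip_bit_iff[of k n x] flip_bit_less_power[of k n x] by (auto simp: Q_U_def)

lemma Q_adj_sym: "Q_adj n u v \<longleftrightarrow> Q_adj n v u"
  by (auto simp: Q_adj_def)

lemma Q_adj_Q_U_iff: "Q_adj n u v \<Longrightarrow> u < 2 ^ n \<Longrightarrow> v \<in> Q_U n \<longleftrightarrow> u \<notin> Q_U n"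
  by (auto simp: Q_adj_def flip_bit_Q_U_iff)

lemma not_Q_adj_flip_bit_flip_bit:
  assumes "k < n" "l < n" "y < 2 ^ n"
  shows "\<not> Q_adj n y (flip_bit l (flip_bit k y))"
proof
  assume "Q_adj n y (flip_bit l (flip_bit k y))"
  moreover have "flip_bit l (flip_bit k y) \<in> Q_U n \<longleftrightarrow> y \<in> Q_U n"
    using assms by (simp add: flip_bit_Q_U_iff flip_bit_less_power)
  ultimately show False
    using Q_adj_Q_U_iff assms(3) by blast
qed

lemma path_verts_ne_Nil [simp]: "path_verts x ks \<noteq> []"
  by (cases ks) auto

lemma path_verts_eq_Cons: "path_verts x ks = x # tl (path_verts x ks)"
  by (cases ks) auto

lemma last_path_verts: "last (path_verts x ks) = fold flip_bit ks x"
  by (induction ks arbitrary: x) auto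

lemma path_verts_append:
  "path_verts x (ks @ ls) = butlast (path_verts x ks) @ path_verts (fold flip_bit ks x) ls"
  by (induction ks arbitrary: x) auto

lemma fold_flip_bit_less_power: "\<forall>k\<in>set ks. k < n \<Longrightarrow> (x::nat) < 2 ^ n \<Longrightarrow> fold flip_bit ks x < 2 ^ n"
  by (induction ks arbitrary: x) (auto simp: flip_bit_less_power)

lemma bit_fold_flip_bit_iff: "bit (fold flip_bit ks (x::nat)) t \<longleftrightarrow> bit x t \<noteq> odd (count_list ks t)"
  by (induction ks arbitrary: x) (auto simp: bit_flip_bit_iff)

lemma is_loop_iff: "is_loop x ks \<longleftrightarrow> fold flip_bit ks x = x"
  by (simp add: is_loop_def last_path_verts)

lemma is_loop_even_count_list: "is_loop x ks \<Longrightarrow> even (count_list ks t)"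
  using bit_fold_flip_bit_iff[of ks x t] by (auto simp: is_loop_iff)

lemma path_proj_append:
  fixes p :: "nat \<Rightarrow> 'a::monoid_mult" and x :: nat and ks :: "nat list"
  defines "y \<equiv> fold flip_bit ks x"
  assumes "p y * p y = p y"
  shows "path_proj p x (ks @ ls) = path_proj p x ks * path_proj p y ls"
proof -
  define B where "B = prod_list (map p (butlast (path_verts x ks)))"
  have "path_proj p x ks = prod_list (map p (butlast (path_verts x ks) @ [last (path_verts x ks)]))"
    unfolding path_proj_def by simp
  also have "\<dots> = B * p y"
    by (simp add: B_def y_def last_path_verts)
  finally have "path_proj p x ks = B * p y" .
  moreover have "p y * path_proj p y ls = path_proj p y ls"
    unfolding path_proj_def using assms(2) by (subst (1 2) path_verts_eq_Cons) (simp flip: mult.assoc)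
  moreover have "path_proj p x (ks @ ls) = B * path_proj p y ls"
    unfolding path_proj_def path_verts_append B_def y_def by simp
  ultimately show ?thesis
    by (simp add: mult.assoc)
qed

locale hypercube_rep = unital_cstar_algebra scaleC star
  for scaleC :: "complex \<Rightarrow> 'a::{real_normed_algebra_1, banach} \<Rightarrow> 'a" and star +
  fixes n :: nat and p :: "nat \<Rightarrow> 'a"
  assumes Q_rep: "Q_rep n star p"
begin

lemma is_projection_p: "x < 2 ^ n \<Longrightarrow> is_projection star (p x)"
  using Q_rep by (simp add: Q_rep_def)

lemma p_idem: "x < 2 ^ n \<Longrightarrow> p x * p x = p x"
  using is_projection_p by (simp add: is_projection_def)

lemma p_mult_eq_0:
  assumes y: "y < 2 ^ n" and w: "w < 2 ^ n" and "y \<noteq> w" and nonadj: "\<not> Q_adj n y w"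
  shows "p y * p w = 0"
proof -
  have fin: "finite (Q_U n)" "finite (Q_V n)"
    by (auto intro: finite_subset[of _ "{..<2 ^ n}"] simp: Q_U_def Q_V_def)
  have proj: "\<And>i. i \<in> Q_U n \<Longrightarrow> is_projection star (p i)" "\<And>i. i \<in> Q_V n \<Longrightarrow> is_projection star (p i)"
    by (auto intro: is_projection_p simp: Q_U_def Q_V_def)
  have sums: "(\<Sum>i\<in>Q_U n. p i) = 1" "(\<Sum>i\<in>Q_V n. p i) = 1"
    using Q_rep by (simp_all add: Q_rep_def)
  consider "y \<in> Q_U n" "w \<in> Q_U n" | "y \<in> Q_V n" "w \<in> Q_V n" | "y \<in> Q_U n" "w \<in> Q_V n" | "y \<in> Q_V n" "w \<in> Q_U n"
    using y w by (auto simp: Q_V_eq)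
  then show ?thesis
  proof cases
    case 1
    then show ?thesis
      using projections_sum_1_orthogonal[OF fin(1) proj(1) sums(1)] \<open>y \<noteq> w\<close> by blast
  next
    case 2
    then show ?thesis
      using projections_sum_1_orthogonal[OF fin(2) proj(2) sums(2)] \<open>y \<noteq> w\<close> by blast
  next
    case 3
    then show ?thesis
      using Q_rep nonadj by (simp add: Q_rep_def)
  next
    case 4
    then have "p w * p y = 0"
      using Q_rep nonadj by (simp add: Q_rep_def Q_adj_sym)
    then have "star (p w * p y) = 0"
      by simp
    then show ?thesis
      using is_projection_p[OF y] is_projection_p[OF w] by (simp add: star_mult is_projection_def)
  qed
qed

lemma p_mult_mult_eq_0:
  assumes y: "y < 2 ^ n" and w: "w < 2 ^ n" and kl: "k < n" "l < n" "k \<noteq> l"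
    and "w \<noteq> flip_bit k y" "w \<noteq> flip_bit l y"
  defines "z \<equiv> flip_bit l (flip_bit k y)"
  shows "p y * p w * p z = 0"
proof -
  have z: "z < 2 ^ n"
    using y kl by (simp add: z_def flip_bit_less_power)
  have "p y * p z = 0"
    using y z kl by (intro p_mult_eq_0) (simp_all add: z_def flip_bit_flip_bit_neq not_Q_adj_flip_bit_flip_bit)
  show ?thesis
  proof (cases "w = y \<or> \<not> Q_adj n y w")
    case True
    then have "w = y \<or> p y * p w = 0"
      using p_mult_eq_0[OF y w] by blast
    then show ?thesis
      using \<open>p y * p z = 0\<close> p_idem[OF y] by auto
  next
    case False
    then obtain i where i: "i < n" "w = flip_bit i y"
      by (auto simp: Q_adj_def)
    have "\<not> Q_adj n w z"
    proof
      assume "Q_adj n w z"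
      then obtain j where "z = flip_bit j w"
        by (auto simp: Q_adj_def)
      then show False
        using flip_bit_flip_bit_eq_imp[of j i y l k] i assms(6,7) kl by (auto simp: z_def)
    qed
    moreover have "w \<noteq> z"
      using False y kl by (auto simp: z_def not_Q_adj_flip_bit_flip_bit)
    ultimately have "p w * p z = 0"
      using w z by (intro p_mult_eq_0)
    then show ?thesis
      by (simp add: mult.assoc)
  qed
qed

lemma p_square_anticommute:
  assumes y: "y < 2 ^ n" and kl: "k < n" "l < n" "k \<noteq> l"
  defines "z \<equiv> flip_bit l (flip_bit k y)"
  shows "p y * p (flip_bit k y) * p z = - (p y * p (flip_bit l y) * p z)"
proof -
  define W where "W = (if y \<in> Q_U n then Q_V n else Q_U n)"
  define a b where "a = flip_bit k y" and "b = flip_bit l y"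
  have fin: "finite W" and sum_W: "(\<Sum>w\<in>W. p w) = 1"
    using Q_rep by (auto intro: finite_subset[of _ "{..<2 ^ n}"] simp: W_def Q_rep_def Q_U_def Q_V_def)
  have W_less: "w < 2 ^ n" if "w \<in> W" for w
    using that by (auto simp: W_def Q_U_def Q_V_def split: if_splits)
  have ab: "a \<in> W" "b \<in> W" "a \<noteq> b"
    using y kl by (auto simp: W_def Q_V_eq a_def b_def flip_bit_less_power flip_bit_Q_U_iff bit_eq_iff bit_flip_bit_iff)
  have "0 = p y * p z"
    using y kl by (intro p_mult_eq_0[symmetric])
      (simp_all add: z_def flip_bit_less_power flip_bit_flip_bit_neq not_Q_adj_flip_bit_flip_bit)
  also have "\<dots> = (\<Sum>w\<in>W. p y * p w * p z)"
    using sum_W by (simp flip: sum_distrib_left sum_distrib_right)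
  also have "\<dots> = p y * p a * p z + p y * p b * p z"
    using fin ab y kl W_less
    by (subst sum.mono_neutral_right[of W "{a, b}"]) (auto simp: z_def a_def b_def p_mult_mult_eq_0)
  finally show ?thesis
    by (simp add: a_def b_def eq_neg_iff_add_eq_0)
qed

lemma path_proj_split:
  assumes "x < 2 ^ n" "\<forall>k\<in>set ks. k < n"
  shows "path_proj p x (ks @ ls) = path_proj p x ks * path_proj p (fold flip_bit ks x) ls"
  using assms by (intro path_proj_append p_idem fold_flip_bit_less_power)

lemma path_proj_swap:
  assumes x: "x < 2 ^ n" and js: "\<forall>j\<in>set js. j < n" and kl: "k < n" "l < n" "k \<noteq> l"
  shows "path_proj p x (js @ k # l # ls) = - path_proj p x (js @ l # k # ls)"
proof -
  define y where "y = fold flip_bit js x"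
  have y: "y < 2 ^ n"
    using x js by (simp add: y_def fold_flip_bit_less_power)
  have "path_proj p y [k, l] = - path_proj p y [l, k]"
    using p_square_anticommute[OF y kl] by (simp add: path_proj_def mult.assoc flip_bit_commute[of k l])
  moreover have "path_proj p y ([k, l] @ ls) = path_proj p y [k, l] * path_proj p (fold flip_bit [k, l] y) ls"
    "path_proj p y ([l, k] @ ls) = path_proj p y [l, k] * path_proj p (fold flip_bit [l, k] y) ls"
    by (rule path_proj_split[OF y], use kl in simp)+
  ultimately have "path_proj p y ([k, l] @ ls) = - path_proj p y ([l, k] @ ls)"
    by (simp add: flip_bit_commute[of k l])
  then show ?thesis
    using x js by (simp add: path_proj_split y_def)
qed

lemma path_proj_move_right:
  assumes x: "x < 2 ^ n" and idx: "\<forall>j\<in>set (js @ k # cs). j < n"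
  shows "path_proj p x (js @ k # cs @ ls)
    = (- 1) ^ length (filter (\<lambda>c. c \<noteq> k) cs) * path_proj p x (js @ cs @ k # ls)"
  using idx
proof (induction cs arbitrary: js)
  case Nil
  then show ?case
    by simp
next
  case (Cons c cs)
  have IH: "path_proj p x ((js @ [c]) @ k # cs @ ls)
      = (- 1) ^ length (filter (\<lambda>c. c \<noteq> k) cs) * path_proj p x ((js @ [c]) @ cs @ k # ls)"
    using Cons.IH[of "js @ [c]"] Cons.prems by simp
  show ?case
  proof (cases "c = k")
    case True
    then show ?thesis
      using IH by simp
  next
    case False
    then have "path_proj p x (js @ k # c # cs @ ls) = - path_proj p x (js @ c # k # cs @ ls)"
      using Cons.prems by (intro path_proj_swap[OF x]) auto
    with IH False show ?thesis
      by simp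
  qed
qed

lemma path_proj_swap_blocks:
  assumes x: "x < 2 ^ n" and idx: "\<forall>j\<in>set (js @ ds @ cs). j < n"
  shows "path_proj p x (js @ ds @ cs)
    = (- 1) ^ (\<Sum>d\<leftarrow>ds. length (filter (\<lambda>c. c \<noteq> d) cs)) * path_proj p x (js @ cs @ ds)"
  using idx
proof (induction ds arbitrary: js)
  case Nil
  then show ?case
    by simp
next
  case (Cons d ds)
  have "path_proj p x (js @ (d # ds) @ cs)
      = (- 1) ^ (\<Sum>d\<leftarrow>ds. length (filter (\<lambda>c. c \<noteq> d) cs)) * path_proj p x ((js @ [d]) @ cs @ ds)"
    using Cons.IH[of "js @ [d]"] Cons.prems by simp
  also have "path_proj p x ((js @ [d]) @ cs @ ds)
      = (- 1) ^ length (filter (\<lambda>c. c \<noteq> d) cs) * path_proj p x (js @ cs @ d # ds)"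
    using path_proj_move_right[OF x, of js d cs ds] Cons.prems by auto
  finally show ?case
    by (simp add: add.commute flip: mult.assoc power_add)
qed

lemma path_proj_loop_append_commute:
  assumes x: "x < 2 ^ n" and "\<forall>k\<in>set ks. k < n" "\<forall>l\<in>set ls. l < n" and loop: "is_loop x ks"
  shows "path_proj p x (ks @ ls) = path_proj p x (ls @ ks)"
proof -
  have "(\<Sum>d\<leftarrow>ks. length (filter (\<lambda>c. c \<noteq> d) ls))
      = (\<Sum>d\<in>set ks. count_list ks d * length (filter (\<lambda>c. c \<noteq> d) ls))"
    by (rule sum_list_map_eq_sum_count)
  moreover have "even \<dots>"
    using is_loop_even_count_list[OF loop] by (intro dvd_sum) simp
  ultimately show ?thesis
    using path_proj_swap_blocks[OF x, of "[]" ks ls] assms(2,3) by auto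
qed

end

theorem lemma3p4:
  fixes n x :: nat and ks ls :: "nat list"
    and scaleC :: "complex \<Rightarrow> 'a::{real_normed_algebra_1, banach} \<Rightarrow> 'a"
    and star :: "'a \<Rightarrow> 'a" and p :: "nat \<Rightarrow> 'a"
  assumes "unital_cstar_algebra scaleC star"
    and "Q_rep n star p"
    and "1 \<le> n" and "x < 2 ^ n"
    and "\<forall>k\<in>set ks. k < n" and "\<forall>l\<in>set ls. l < n"
    and "is_loop x ks" and "is_loop x ls"
  shows "path_proj p x ks * path_proj p x ls = path_proj p x ls * path_proj p x ks"
proof -
  interpret hypercube_rep scaleC star n p
    using assms(1,2) by (simp add: hypercube_rep_def hypercube_rep_axioms_def)
  have "path_proj p x ks * path_proj p x ls = path_proj p x (ks @ ls)"
    using path_proj_split[OF assms(4,5)] assms(7) by (simp add: is_loop_iff)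
  also have "\<dots> = path_proj p x (ls @ ks)"
    using path_proj_loop_append_commute[OF assms(4,5,6,7)] .
  also have "\<dots> = path_proj p x ls * path_proj p x ks"
    using path_proj_split[OF assms(4,6)] assms(8) by (simp add: is_loop_iff)
  finally show ?thesis .
qed

end
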